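(* Let $\Omega\subset\mathbb{R}^d$ be a bounded open set, $\mathcal{O}\subset\mathbb{R}^d$ a nonempty open set and $\mathfrak{B}\in W^{1,\infty}(\mathbb{R}^d)^d$ (independent of time). Assume that for every $x_0\in\overline{\Omega}$ there exists $t\in(-\infty,0)$ with $\Phi(t,0,x_0)\in\mathcal{O}$. Then there exist $T_0>0$ and $r_0>0$ such that, for all $T>T_0$, $(T,T_0,r_0,\mathfrak{B},\Omega)$ satisfies the flushing condition for $\mathcal{O}$.
   Context: $\Phi(t,t_0,x_0)$ denotes the solution of $\frac{d}{dt}\Phi(t,t_0,x_0)=\mathfrak{B}(\Phi(t,t_0,x_0))$, $\Phi(t_0,t_0,x_0)=x_0$. Given $T>0$, $T_0\in(0,T)$, $r_0>0$ and a nonempty open $\mathcal{O}\subset\mathbb{R}^d$, we say $(T,T_0,r_0,\mathfrak{B},\Omega)$ satisfies the flushing condition for $\mathcal{O}$ if: for all $x_0\in\overline{\Omega}$ and all $t_0\in[T_0,T]$ there exists $t\in(t_0-T_0,t_0)$ such that $\Phi(t,t_0,x)\in\mathcal{O}$ for all $x\in\overline{B}(x_0,r_0)$ (closed ball). *)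

theory Defs
  imports "HOL-Analysis.Analysis"
begin

definition is_flow :: "('a::euclidean_space \<Rightarrow> 'a) \<Rightarrow> (real \<Rightarrow> real \<Rightarrow> 'a \<Rightarrow> 'a) \<Rightarrow> bool" where
  "is_flow B \<Phi> \<longleftrightarrow>
     (\<forall>t0 x0. \<Phi> t0 t0 x0 = x0 \<and>
        (\<forall>t. ((\<lambda>s. \<Phi> s t0 x0) has_vector_derivative B (\<Phi> t t0 x0)) (at t)))"

text \<open>W^{1,\<infinity>}(R^d)^d, identified with its Lipschitz continuous representative:
  bounded and globally Lipschitz.\<close>
definition W1inf :: "('a::euclidean_space \<Rightarrow> 'a) \<Rightarrow> bool" where
  "W1inf B \<longleftrightarrow> bounded (range B) \<and> (\<exists>L. L-lipschitz_on UNIV B)"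

definition flushing_condition ::
  "real \<Rightarrow> real \<Rightarrow> real \<Rightarrow> (real \<Rightarrow> real \<Rightarrow> 'a::euclidean_space \<Rightarrow> 'a) \<Rightarrow> 'a set \<Rightarrow> 'a set \<Rightarrow> bool" where
  "flushing_condition T T0 r0 \<Phi> \<Omega> \<O> \<longleftrightarrow>
     (\<forall>x0\<in>closure \<Omega>. \<forall>t0\<in>{T0..T}. \<exists>t\<in>{t0 - T0<..<t0}. \<forall>x\<in>cball x0 r0. \<Phi> t t0 x \<in> \<O>)"

end

theory Submission
  imports Defs
begin

text \<open>Since \<open>B\<close> is Lipschitz, the backward flow map \<open>\<Phi> t 0\<close> (\<open>t < 0\<close>) is continuous, so the
  hypothesis covers the compact set \<open>closure \<Omega>\<close> by the open sets \<open>\<Phi> t 0 -` \<O>\<close>, \<open>t < 0\<close>.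
  Finitely many of them suffice, which bounds the exit times by some \<open>T0\<close>, and a Lebesgue
  number of the finite cover gives the radius \<open>r0\<close>. Autonomy of the field
  (\<open>\<Phi> t t0 = \<Phi> (t - t0) 0\<close>, by uniqueness) transports this from \<open>t0 = 0\<close> to every \<open>t0\<close>.\<close>

lemma exp_weighted_dist_sq_mono:
  fixes B :: "'a::euclidean_space \<Rightarrow> 'a" and y z :: "real \<Rightarrow> 'a"
  assumes L: "L-lipschitz_on UNIV B"
    and y: "\<And>s. (y has_vector_derivative B (y s)) (at s)"
    and z: "\<And>s. (z has_vector_derivative B (z s)) (at s)"
    and "s \<le> a"
  shows "exp (2 * L * s) * (norm (y s - z s))\<^sup>2 \<le> exp (2 * L * a) * (norm (y a - z a))\<^sup>2"
proof -
  have "exp (2 * L * s) * ((y s - z s) \<bullet> (y s - z s)) \<le> exp (2 * L * a) * ((y a - z a) \<bullet> (y a - z a))"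
  proof (rule DERIV_nonneg_imp_nondecreasing[OF \<open>s \<le> a\<close>])
    fix x
    define w where "w = y x - z x"
    define w' where "w' = B (y x) - B (z x)"
    have "((\<lambda>t. y t - z t) has_vector_derivative w') (at x)"
      unfolding w'_def by (intro derivative_intros y z)
    then have "((\<lambda>t. (y t - z t) \<bullet> (y t - z t)) has_derivative (\<lambda>h. w \<bullet> (h *\<^sub>R w') + (h *\<^sub>R w') \<bullet> w)) (at x)"
      unfolding has_vector_derivative_def w_def by (intro has_derivative_inner) auto
    moreover have "(\<lambda>h. w \<bullet> (h *\<^sub>R w') + (h *\<^sub>R w') \<bullet> w) = (*) (2 * (w \<bullet> w'))"
      by (auto simp: inner_commute algebra_simps)
    ultimately have dist_deriv: "((\<lambda>t. (y t - z t) \<bullet> (y t - z t)) has_real_derivative 2 * (w \<bullet> w')) (at x)"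
      by (simp add: has_field_derivative_def)
    have "norm w' \<le> L * norm w"
      using L unfolding w'_def w_def lipschitz_on_def by (auto simp: dist_norm)
    have "\<bar>w \<bullet> w'\<bar> \<le> norm w * norm w'"
      by (rule Cauchy_Schwarz_ineq2)
    also have "\<dots> \<le> norm w * (L * norm w)"
      using \<open>norm w' \<le> L * norm w\<close> by (intro mult_left_mono) auto
    also have "\<dots> = L * (w \<bullet> w)"
      by (simp add: power2_norm_eq_inner[symmetric] power2_eq_square)
    finally have "0 \<le> exp (2 * L * x) * (2 * L * (w \<bullet> w) + 2 * (w \<bullet> w'))"
      by (intro mult_nonneg_nonneg) auto
    moreover have "((\<lambda>t. exp (2 * L * t) * ((y t - z t) \<bullet> (y t - z t))) has_real_derivative
        exp (2 * L * x) * (2 * L) * (w \<bullet> w) + exp (2 * L * x) * (2 * (w \<bullet> w'))) (at x)"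
    proof -
      have "((\<lambda>t. exp (2 * L * t)) has_real_derivative exp (2 * L * x) * (2 * L)) (at x)"
        by (auto intro!: derivative_eq_intros)
      from DERIV_mult[OF this dist_deriv] show ?thesis
        by (simp add: w_def mult.commute)
    qed
    ultimately show "\<exists>d. ((\<lambda>t. exp (2 * L * t) * ((y t - z t) \<bullet> (y t - z t))) has_real_derivative d) (at x) \<and> 0 \<le> d"
      by (auto simp: algebra_simps)
  qed
  then show ?thesis
    by (simp add: power2_norm_eq_inner)
qed

lemma lipschitz_ode_solutions_dist_le:
  fixes B :: "'a::euclidean_space \<Rightarrow> 'a" and y z :: "real \<Rightarrow> 'a"
  assumes L: "L-lipschitz_on UNIV B"
    and y: "\<And>s. (y has_vector_derivative B (y s)) (at s)"
    and z: "\<And>s. (z has_vector_derivative B (z s)) (at s)"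
    and "s \<le> a"
  shows "norm (y s - z s) \<le> exp (L * (a - s)) * norm (y a - z a)"
proof -
  have "(norm (y s - z s))\<^sup>2 \<le> exp (2 * L * a) / exp (2 * L * s) * (norm (y a - z a))\<^sup>2"
    using exp_weighted_dist_sq_mono[OF assms] by (simp add: field_simps)
  also have "exp (2 * L * a) / exp (2 * L * s) = (exp (L * (a - s)))\<^sup>2"
    by (simp add: exp_diff[symmetric] power2_eq_square exp_add[symmetric] algebra_simps)
  finally have "(norm (y s - z s))\<^sup>2 \<le> (exp (L * (a - s)) * norm (y a - z a))\<^sup>2"
    by (simp add: power_mult_distrib)
  then show ?thesis
    by (rule power2_le_imp_le) simp
qed

lemma is_flow_time_shift:
  fixes B :: "'a::euclidean_space \<Rightarrow> 'a"
  assumes flow: "is_flow B \<Phi>" and L: "L-lipschitz_on UNIV B" and "t \<le> t0"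
  shows "\<Phi> t t0 x = \<Phi> (t - t0) 0 x"
proof -
  have shifted: "((\<lambda>s. \<Phi> (s - t0) 0 x) has_vector_derivative B (\<Phi> (s - t0) 0 x)) (at s)" for s
  proof -
    have "((\<lambda>s. s - t0) has_vector_derivative 1) (at s)"
      by (auto intro!: derivative_eq_intros)
    moreover have "((\<lambda>r. \<Phi> r 0 x) has_vector_derivative B (\<Phi> (s - t0) 0 x)) (at (s - t0))"
      using flow unfolding is_flow_def by blast
    ultimately show ?thesis
      using vector_diff_chain_at by (fastforce simp: o_def)
  qed
  have "norm (\<Phi> t t0 x - \<Phi> (t - t0) 0 x) \<le> exp (L * (t0 - t)) * norm (\<Phi> t0 t0 x - \<Phi> (t0 - t0) 0 x)"
    using flow \<open>t \<le> t0\<close> unfolding is_flow_def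
    by (intro lipschitz_ode_solutions_dist_le[OF L _ shifted]) auto
  then show ?thesis
    using flow by (simp add: is_flow_def)
qed

lemma is_flow_lipschitz_backward:
  fixes B :: "'a::euclidean_space \<Rightarrow> 'a"
  assumes flow: "is_flow B \<Phi>" and L: "L-lipschitz_on UNIV B" and "t \<le> t0"
  shows "(exp (L * (t0 - t)))-lipschitz_on UNIV (\<Phi> t t0)"
proof (rule lipschitz_onI)
  fix x x' :: 'a
  have "norm (\<Phi> t t0 x - \<Phi> t t0 x') \<le> exp (L * (t0 - t)) * norm (\<Phi> t0 t0 x - \<Phi> t0 t0 x')"
    using flow \<open>t \<le> t0\<close> unfolding is_flow_def
    by (intro lipschitz_ode_solutions_dist_le[OF L]) auto
  then show "dist (\<Phi> t t0 x) (\<Phi> t t0 x') \<le> exp (L * (t0 - t)) * dist x x'"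
    using flow by (simp add: is_flow_def dist_norm)
qed simp

lemma compact_cover_uniform_ball_bounded_time:
  fixes K :: "'a::metric_space set" and U :: "real \<Rightarrow> 'a set"
  assumes "compact K" and U_open: "\<And>t. t < 0 \<Longrightarrow> open (U t)" and "K \<subseteq> (\<Union>t<0. U t)"
  obtains T0 e where "T0 > 0" "e > 0" "\<And>x. x \<in> K \<Longrightarrow> \<exists>t\<in>{-T0<..<0}. ball x e \<subseteq> U t"
proof -
  obtain C where C: "C \<subseteq> {..<0}" "finite C" "K \<subseteq> (\<Union>t\<in>C. U t)"
    using compactE_image[OF \<open>compact K\<close>, of "{..<0}" U] U_open assms(3) by auto
  have "open G" if "G \<in> U ` C" for G
    using that C(1) U_open by auto
  then obtain e where "e > 0" and e: "\<And>x. x \<in> K \<Longrightarrow> \<exists>G\<in>U ` C. ball x e \<subseteq> G"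
    using Heine_Borel_lemma[OF \<open>compact K\<close> C(3)] by blast
  define T0 where "T0 = 1 + (\<Sum>t\<in>C. - t)"
  have T0_bound: "- T0 < t" if "t \<in> C" for t
  proof -
    have "- t \<le> (\<Sum>t\<in>C. - t)"
      using C that by (intro member_le_sum) auto
    then show ?thesis
      unfolding T0_def by simp
  qed
  have "0 \<le> (\<Sum>t\<in>C. - t)"
    using C(1) by (intro sum_nonneg) auto
  then have "T0 > 0"
    unfolding T0_def by simp
  then show ?thesis
  proof (rule that[OF _ \<open>e > 0\<close>])
    fix x
    assume "x \<in> K"
    then obtain t where "t \<in> C" "ball x e \<subseteq> U t"
      using e by blast
    then show "\<exists>t\<in>{-T0<..<0}. ball x e \<subseteq> U t"
      using T0_bound C(1) by force
  qed
qed

lemma flushing_condition_if_uniform_exit: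
  fixes B :: "'a::euclidean_space \<Rightarrow> 'a"
  assumes flow: "is_flow B \<Phi>" and L: "L-lipschitz_on UNIV B"
    and exit: "\<And>x0. x0 \<in> closure \<Omega> \<Longrightarrow> \<exists>t\<in>{-T0<..<0}. \<forall>x\<in>cball x0 r0. \<Phi> t 0 x \<in> \<O>"
  shows "flushing_condition T T0 r0 \<Phi> \<Omega> \<O>"
  unfolding flushing_condition_def
proof (intro ballI)
  fix x0 t0
  assume "x0 \<in> closure \<Omega>"
  then obtain t where t: "t \<in> {-T0<..<0}" "\<forall>x\<in>cball x0 r0. \<Phi> t 0 x \<in> \<O>"
    using exit by blast
  then have "\<forall>x\<in>cball x0 r0. \<Phi> (t0 + t) t0 x \<in> \<O>"
    using is_flow_time_shift[OF flow L, of "t0 + t" t0] by simp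
  moreover have "t0 + t \<in> {t0 - T0<..<t0}"
    using t(1) by auto
  ultimately show "\<exists>s\<in>{t0 - T0<..<t0}. \<forall>x\<in>cball x0 r0. \<Phi> s t0 x \<in> \<O>"
    by blast
qed

theorem proposition2p1:
  fixes B :: "'a::euclidean_space \<Rightarrow> 'a"
    and \<Phi> :: "real \<Rightarrow> real \<Rightarrow> 'a \<Rightarrow> 'a"
    and \<Omega> \<O> :: "'a set"
  assumes "bounded \<Omega>" and "open \<Omega>"
    and "open \<O>" and "\<O> \<noteq> {}"
    and "W1inf B"
    and "is_flow B \<Phi>"
    and "\<forall>x0\<in>closure \<Omega>. \<exists>t<0. \<Phi> t 0 x0 \<in> \<O>"
  shows "\<exists>T0>0. \<exists>r0>0. \<forall>T>T0. flushing_condition T T0 r0 \<Phi> \<Omega> \<O>"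
proof -
  obtain L where L: "L-lipschitz_on UNIV B"
    using \<open>W1inf B\<close> unfolding W1inf_def by blast
  have "open (\<Phi> t 0 -` \<O>)" if "t < 0" for t
    using is_flow_lipschitz_backward[OF \<open>is_flow B \<Phi>\<close> L, of t 0] that \<open>open \<O>\<close>
    by (intro open_vimage) (auto dest: lipschitz_on_continuous_on simp: continuous_on_eq_continuous_at)
  moreover have "closure \<Omega> \<subseteq> (\<Union>t<0. \<Phi> t 0 -` \<O>)"
    using assms(7) by fastforce
  ultimately obtain T0 e where "T0 > 0" "e > 0"
    and exit: "\<And>x. x \<in> closure \<Omega> \<Longrightarrow> \<exists>t\<in>{-T0<..<0}. ball x e \<subseteq> \<Phi> t 0 -` \<O>"
    using compact_cover_uniform_ball_bounded_time[of "closure \<Omega>"] \<open>bounded \<Omega>\<close>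
    by (metis compact_closure)
  have "\<exists>t\<in>{-T0<..<0}. \<forall>x\<in>cball x0 (e/2). \<Phi> t 0 x \<in> \<O>" if "x0 \<in> closure \<Omega>" for x0
    using exit[OF that] \<open>e > 0\<close> by (fastforce simp: subset_eq)
  then show ?thesis
    using flushing_condition_if_uniform_exit[OF \<open>is_flow B \<Phi>\<close> L] \<open>T0 > 0\<close> \<open>e > 0\<close>
    by (metis half_gt_zero)
qed

end
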